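(* Let $\kappa$ be a regular uncountable cardinal. Then (a) the quotient Boolean algebra $\mathcal P(\kappa)/[\kappa]^{<\kappa}$ does not have the $\kappa$-FN, and (b) the power set algebra $\mathcal P(\kappa)$ does not have the $\kappa$-FN.
   Context: For an infinite cardinal $\kappa$, a Boolean algebra $B$ has the $\kappa$-Freese–Nation property ($\kappa$-FN) if there is a map $f:B\to[B]^{<\kappa}$ such that for all $a,b\in B$ with $a\le b$ there is $c\in f(a)\cap f(b)$ with $a\le c\le b$. $[\kappa]^{<\kappa}$ denotes the ideal of subsets of $\kappa$ of cardinality $<\kappa$. *)

theory Defs
  imports Main "HOL-Library.Countable_Set"
begin

text \<open>The cardinal kappa is represented by a set K (kappa = |K|); cardinality
comparisons use the library's card_of and ordLess from Main (HOL-Library for countable).\<close>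

definition kappa_FN :: "'k set \<Rightarrow> 'b set \<Rightarrow> ('b \<Rightarrow> 'b \<Rightarrow> bool) \<Rightarrow> bool" where
  "kappa_FN K B le \<longleftrightarrow>
     (\<exists>f. (\<forall>a\<in>B. f a \<subseteq> B \<and> (card_of (f a), card_of K) \<in> ordLess) \<and>
          (\<forall>a\<in>B. \<forall>b\<in>B. le a b \<longrightarrow> (\<exists>c\<in>f a \<inter> f b. le a c \<and> le c b)))"

definition small_ideal :: "'k set \<Rightarrow> 'k set set" where
  "small_ideal K = {A. A \<subseteq> K \<and> (card_of A, card_of K) \<in> ordLess}"

definition mod_small :: "'k set \<Rightarrow> ('k set \<times> 'k set) set" where
  "mod_small K = {(A, B). A \<subseteq> K \<and> B \<subseteq> K \<and> (A - B) \<union> (B - A) \<in> small_ideal K}"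

definition quot_carrier :: "'k set \<Rightarrow> 'k set set set" where
  "quot_carrier K = Pow K // mod_small K"

definition quot_le :: "'k set \<Rightarrow> 'k set set \<Rightarrow> 'k set set \<Rightarrow> bool" where
  "quot_le K X Y \<longleftrightarrow> (\<exists>A\<in>X. \<exists>B\<in>Y. A - B \<in> small_ideal K)"

end

theory Submission
  imports Defs "HOL-Library.Disjoint_Sets"
begin

(* It suffices that B contains elements D xi (xi in kappa) and
   X Z (Z \<subseteq> kappa) with D xi <= X Z for xi in Z but nothing between D q and X Z for q not in Z:
   in P(kappa) singletons and Z itself, in the quotient the classes of the pieces of a partition of
   kappa into kappa sets of size kappa and of their unions. Each of the kappa pairs (xi, c) with
   c in f (D xi) determines the set of eta with D eta <= c; a transfinite construction gives a Z of
   size kappa containing none of these sets that have size kappa. By regularity, kappa many xi in Z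
   share one interpolant c in the small set f (X Z) for D xi <= X Z; the set determined by such
   (xi, c) then has size kappa, hence a point q outside Z, and D q <= c <= X Z is impossible. *)

unbundle cardinal_syntax

lemma empty_ordLess_card_of: "K \<noteq> {} \<Longrightarrow> |{}| <o |K|"
  by (metis card_of_Well_order card_of_empty3 not_ordLeq_iff_ordLess)

lemma inj_on_choice_from_large_sets:
  fixes A :: "'i \<Rightarrow> 'a set" and K :: "'k set"
  assumes small_index: "|I| \<le>o |K|"
    and large: "\<And>i. i \<in> I \<Longrightarrow> \<not> |A i| <o |K|"
  shows "\<exists>h. inj_on h I \<and> (\<forall>i\<in>I. h i \<in> A i)"
proof -
  interpret wo_rel "|I|" by (simp add: wo_rel_def card_of_Well_order)
  define F where "F h i = (SOME x. x \<in> A i - h ` underS i)" for h :: "'i \<Rightarrow> 'a" and i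
  define h where "h = worec F"
  have "adm_wo F" unfolding adm_wo_def F_def by (metis image_cong)
  then have h_rec: "h i = (SOME x. x \<in> A i - h ` underS i)" for i
    unfolding h_def by (metis worec_fixpoint F_def)
  have h_new: "h i \<in> A i - h ` underS i" if "i \<in> I" for i
  proof -
    have "|h ` underS i| <o |K|"
      using card_of_image card_of_underS[of "|I|" i] that small_index
      by (metis Field_card_of card_of_Card_order ordLeq_ordLess_trans ordLess_ordLeq_trans)
    then have "\<not> A i \<subseteq> h ` underS i"
      using large[OF that] card_of_mono1 ordLeq_ordLess_trans by blast
    then show ?thesis unfolding h_rec[of i] by (metis Diff_iff subsetI someI_ex)
  qed
  have "inj_on h I"
  proof (rule inj_onI)
    fix i j assume ij: "i \<in> I" "j \<in> I" "h i = h j"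
    show "i = j"
    proof (rule ccontr)
      assume "i \<noteq> j"
      then have "i \<in> underS j \<or> j \<in> underS i"
        using TOTALS ij by (auto simp: underS_def Field_card_of)
      then show False using h_new ij by (metis Diff_iff image_eqI)
    qed
  qed
  then show ?thesis using h_new by blast
qed

lemma exists_large_subset_containing_none:
  fixes E :: "'j \<Rightarrow> 'k set"
  assumes inf: "infinite K" and small_index: "|J| \<le>o |K|"
    and E_large: "\<And>j. j \<in> J \<Longrightarrow> \<not> |E j| <o |K|"
  shows "\<exists>Z\<subseteq>K. \<not> |Z| <o |K| \<and> (\<forall>j\<in>J. \<not> E j \<subseteq> Z)"
proof -
  \<comment> \<open>The points chosen for Inr k form Z; the point chosen for Inl j lies in E j but,
      by injectivity, not in Z.\<close>
  define A where "A = case_sum E (\<lambda>_ :: 'k. K)"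
  have "|J <+> K| \<le>o |K|"
    using card_of_Plus_infinite[OF inf small_index] ordIso_imp_ordLeq by blast
  moreover have "\<not> |A s| <o |K|" if "s \<in> J <+> K" for s
    using that E_large by (auto simp: A_def ordLess_irreflexive)
  ultimately obtain h where h_inj: "inj_on h (J <+> K)" and h_in: "\<forall>s\<in>J <+> K. h s \<in> A s"
    using inj_on_choice_from_large_sets by metis
  have h_Inl: "h (Inl j) \<in> E j" if "j \<in> J" for j
    using that h_in by (force simp: A_def)
  have h_Inr: "h (Inr k) \<in> K" if "k \<in> K" for k
    using that h_in by (force simp: A_def)
  define Z where "Z = h ` Inr ` K"
  have "Z \<subseteq> K" using h_Inr by (auto simp: Z_def)
  moreover have "|K| \<le>o |Z|"
    by (rule card_of_ordLeqI[of "h \<circ> Inr"]) (use h_inj in \<open>auto simp: Z_def inj_on_def\<close>)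
  then have "\<not> |Z| <o |K|" using not_ordLess_ordLeq by blast
  moreover have "h (Inl j) \<in> E j - Z" if "j \<in> J" for j
    using that h_Inl h_inj by (auto simp: Z_def inj_on_def)
  ultimately show ?thesis by blast
qed

lemma regularCard_pigeonhole:
  assumes reg: "regularCard |K|" and inf: "infinite K"
    and Z_large: "\<not> |Z| <o |K|" and C_small: "|C| <o |K|" and f_into: "f ` Z \<subseteq> C"
  shows "\<exists>c\<in>C. \<not> |{z\<in>Z. f z = c}| <o |K|"
proof (rule ccontr)
  assume "\<not> ?thesis"
  then have "|\<Union>c\<in>C. {z\<in>Z. f z = c}| <o |K|"
    using inf C_small by (intro regularCard_UNION_bound[OF _ reg])
      (auto simp: cinfinite_def Field_card_of card_of_card_order_on)
  moreover have "Z \<subseteq> (\<Union>c\<in>C. {z\<in>Z. f z = c})" using f_into by blast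
  ultimately show False
    using Z_large card_of_mono1 ordLeq_ordLess_trans by blast
qed

lemma not_kappa_FN_if_no_interpolants:
  fixes D :: "'k \<Rightarrow> 'b" and X :: "'k set \<Rightarrow> 'b"
  assumes reg: "regularCard |K|" and inf: "infinite K"
    and D_in: "\<And>\<xi>. \<xi> \<in> K \<Longrightarrow> D \<xi> \<in> B" and X_in: "\<And>Z. Z \<subseteq> K \<Longrightarrow> X Z \<in> B"
    and D_le_X: "\<And>Z \<xi>. Z \<subseteq> K \<Longrightarrow> \<xi> \<in> Z \<Longrightarrow> le (D \<xi>) (X Z)"
    and no_interpolant:
      "\<And>Z q c. Z \<subseteq> K \<Longrightarrow> q \<in> K - Z \<Longrightarrow> c \<in> B \<Longrightarrow> le (D q) c \<Longrightarrow> \<not> le c (X Z)"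
  shows "\<not> kappa_FN K B le"
proof
  assume "kappa_FN K B le"
  then obtain f where f_small: "\<And>a. a \<in> B \<Longrightarrow> f a \<subseteq> B \<and> |f a| <o |K|"
    and f_interpolates: "\<And>a b. a \<in> B \<Longrightarrow> b \<in> B \<Longrightarrow> le a b \<Longrightarrow> \<exists>c\<in>f a \<inter> f b. le a c \<and> le c b"
    unfolding kappa_FN_def by blast
  define I where "I = (SIGMA \<xi>:K. f (D \<xi>))"
  define E where "E i = {\<eta>\<in>K. le (D \<eta>) (snd i)}" for i :: "'k \<times> 'b"
  have "|I| \<le>o |K|" unfolding I_def
    using f_small D_in
    by (intro card_of_Sigma_ordLeq_infinite[OF inf]) (auto intro: ordLess_imp_ordLeq card_of_mono1)
  define J where "J = {i\<in>I. \<not> |E i| <o |K|}"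
  have "J \<subseteq> I" by (auto simp: J_def)
  with \<open>|I| \<le>o |K|\<close> have "|J| \<le>o |K|" using card_of_mono1 ordLeq_transitive by blast
  then have "\<exists>Z\<subseteq>K. \<not> |Z| <o |K| \<and> (\<forall>i\<in>J. \<not> E i \<subseteq> Z)"
    by (rule exists_large_subset_containing_none[OF inf]) (auto simp: J_def E_def)
  then obtain Z where Z_sub: "Z \<subseteq> K" and Z_large: "\<not> |Z| <o |K|"
    and Z_avoids: "\<And>i. i \<in> I \<Longrightarrow> \<not> |E i| <o |K| \<Longrightarrow> \<not> E i \<subseteq> Z"
    by (auto simp: J_def)
  have XZ_in: "X Z \<in> B" using X_in Z_sub .
  have "\<forall>\<xi>\<in>Z. \<exists>c. c \<in> f (D \<xi>) \<inter> f (X Z) \<and> le (D \<xi>) c \<and> le c (X Z)"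
  proof
    fix \<xi> assume "\<xi> \<in> Z"
    with Z_sub show "\<exists>c. c \<in> f (D \<xi>) \<inter> f (X Z) \<and> le (D \<xi>) c \<and> le c (X Z)"
      using f_interpolates[OF D_in XZ_in D_le_X[OF Z_sub]] by blast
  qed
  then obtain c where c: "\<And>\<xi>. \<xi> \<in> Z \<Longrightarrow> c \<xi> \<in> f (D \<xi>) \<inter> f (X Z) \<and> le (D \<xi>) (c \<xi>) \<and> le (c \<xi>) (X Z)"
    by (metis bchoice)
  obtain c\<^sub>0 where c\<^sub>0: "c\<^sub>0 \<in> f (X Z)" and T_large: "\<not> |{\<xi>\<in>Z. c \<xi> = c\<^sub>0}| <o |K|"
    using regularCard_pigeonhole[OF reg inf Z_large, of "f (X Z)" c] f_small[OF XZ_in] c by blast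
  define T where "T = {\<xi>\<in>Z. c \<xi> = c\<^sub>0}"
  have "T \<noteq> {}"
    using T_large empty_ordLess_card_of[of K] inf unfolding T_def by (metis finite.emptyI)
  then obtain \<xi>\<^sub>0 where "\<xi>\<^sub>0 \<in> T" by blast
  then have i\<^sub>0: "(\<xi>\<^sub>0, c\<^sub>0) \<in> I" using c Z_sub by (auto simp: T_def I_def)
  have "T \<subseteq> E (\<xi>\<^sub>0, c\<^sub>0)" using c Z_sub by (auto simp: T_def E_def)
  then have "\<not> |E (\<xi>\<^sub>0, c\<^sub>0)| <o |K|"
    using T_large card_of_mono1 ordLeq_ordLess_trans unfolding T_def by blast
  then obtain q where "q \<in> K - Z" and "le (D q) c\<^sub>0"
    using Z_avoids[OF i\<^sub>0] by (auto simp: E_def)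
  moreover have "c\<^sub>0 \<in> B" using c\<^sub>0 f_small[OF XZ_in] by blast
  moreover have "le c\<^sub>0 (X Z)" using \<open>\<xi>\<^sub>0 \<in> T\<close> c by (auto simp: T_def)
  ultimately show False using no_interpolant[OF Z_sub] by blast
qed

lemma not_kappa_FN_Pow:
  assumes "regularCard |K|" and "infinite K"
  shows "\<not> kappa_FN K (Pow K) (\<subseteq>)"
  by (rule not_kappa_FN_if_no_interpolants[OF assms, where D = "\<lambda>\<xi>. {\<xi>}" and X = "\<lambda>Z. Z"]) auto

lemma exists_large_disjoint_family:
  assumes "infinite K"
  shows "\<exists>P. (\<forall>\<xi>\<in>K. P \<xi> \<subseteq> K \<and> \<not> |P \<xi>| <o |K| ) \<and> disjoint_family_on P K"
proof -
  obtain g where g: "bij_betw g (K \<times> K) K"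
    using card_of_Times_same_infinite[OF assms] card_of_ordIso by blast
  define P where "P \<xi> = g ` ({\<xi>} \<times> K)" for \<xi>
  have "P \<xi> \<subseteq> K" if "\<xi> \<in> K" for \<xi>
    using that g by (auto simp: P_def bij_betw_def)
  moreover have "|K| \<le>o |P \<xi>|" if "\<xi> \<in> K" for \<xi>
    using that g by (intro card_of_ordLeqI[of "\<lambda>k. g (\<xi>, k)"]) (auto simp: P_def bij_betw_def inj_on_def)
  then have "\<not> |P \<xi>| <o |K|" if "\<xi> \<in> K" for \<xi>
    using that not_ordLess_ordLeq by blast
  moreover have "disjoint_family_on P K"
    using g by (auto simp: disjoint_family_on_def P_def bij_betw_def inj_on_def)
  ultimately show ?thesis by blast
qed

lemma small_ideal_Un:
  "infinite K \<Longrightarrow> A \<in> small_ideal K \<Longrightarrow> B \<in> small_ideal K \<Longrightarrow> A \<union> B \<in> small_ideal K"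
  by (simp add: small_ideal_def card_of_Un_ordLess_infinite)

lemma small_ideal_subset: "A \<subseteq> B \<Longrightarrow> B \<in> small_ideal K \<Longrightarrow> A \<in> small_ideal K"
  unfolding small_ideal_def using card_of_mono1 ordLeq_ordLess_trans by blast

lemma empty_in_small_ideal: "K \<noteq> {} \<Longrightarrow> {} \<in> small_ideal K"
  by (simp add: small_ideal_def empty_ordLess_card_of)

lemma class_in_quot_carrier: "A \<subseteq> K \<Longrightarrow> mod_small K `` {A} \<in> quot_carrier K"
  unfolding quot_carrier_def by (intro quotientI) simp

lemma mod_small_diffs:
  "(A, B) \<in> mod_small K \<Longrightarrow> A - B \<in> small_ideal K \<and> B - A \<in> small_ideal K"
  unfolding mod_small_def by (auto intro: small_ideal_subset[rotated])

lemma quot_le_class_iff: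
  assumes inf: "infinite K" and "A \<subseteq> K" "B \<subseteq> K"
  shows "quot_le K (mod_small K `` {A}) (mod_small K `` {B}) \<longleftrightarrow> A - B \<in> small_ideal K"
proof
  assume "quot_le K (mod_small K `` {A}) (mod_small K `` {B})"
  then obtain A' B' where "(A, A') \<in> mod_small K" "(B, B') \<in> mod_small K" "A' - B' \<in> small_ideal K"
    unfolding quot_le_def by auto
  then have "(A - A') \<union> (A' - B') \<union> (B' - B) \<in> small_ideal K"
    by (intro small_ideal_Un[OF inf]) (auto dest: mod_small_diffs)
  then show "A - B \<in> small_ideal K" by (rule small_ideal_subset[rotated]) blast
next
  have "(A, A) \<in> mod_small K" "(B, B) \<in> mod_small K"
    using assms empty_in_small_ideal[of K] by (auto simp: mod_small_def)
  then show "A - B \<in> small_ideal K \<Longrightarrow> quot_le K (mod_small K `` {A}) (mod_small K `` {B})"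
    unfolding quot_le_def by blast
qed

lemma quot_le_trans:
  assumes inf: "infinite K"
    and "X \<in> quot_carrier K" "Y \<in> quot_carrier K" "W \<in> quot_carrier K"
    and XY: "quot_le K X Y" and YW: "quot_le K Y W"
  shows "quot_le K X W"
proof -
  obtain A B C where ABC: "A \<subseteq> K" "B \<subseteq> K" "C \<subseteq> K"
    and X: "X = mod_small K `` {A}" and Y: "Y = mod_small K `` {B}" and W: "W = mod_small K `` {C}"
    using assms(2-4) unfolding quot_carrier_def by (metis PowD quotientE)
  have "A - B \<in> small_ideal K" using XY quot_le_class_iff[OF inf ABC(1,2)] X Y by simp
  moreover have "B - C \<in> small_ideal K" using YW quot_le_class_iff[OF inf ABC(2,3)] Y W by simp
  ultimately have "(A - B) \<union> (B - C) \<in> small_ideal K" by (rule small_ideal_Un[OF inf])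
  then have "A - C \<in> small_ideal K" by (rule small_ideal_subset[rotated]) blast
  then show ?thesis using quot_le_class_iff[OF inf ABC(1,3)] X W by simp
qed

lemma not_kappa_FN_quot:
  assumes reg: "regularCard |K|" and inf: "infinite K"
  shows "\<not> kappa_FN K (quot_carrier K) (quot_le K)"
proof -
  obtain P where P_sub: "\<And>\<xi>. \<xi> \<in> K \<Longrightarrow> P \<xi> \<subseteq> K" and P_large: "\<And>\<xi>. \<xi> \<in> K \<Longrightarrow> \<not> |P \<xi>| <o |K|"
    and P_disj: "disjoint_family_on P K"
    using exists_large_disjoint_family[OF inf] by blast
  let ?cls = "\<lambda>A. mod_small K `` {A}"
  have UN_P_sub: "(\<Union>\<xi>\<in>Z. P \<xi>) \<subseteq> K" if "Z \<subseteq> K" for Z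
    using that P_sub by blast
  show ?thesis
  proof (rule not_kappa_FN_if_no_interpolants[OF reg inf,
        where D = "\<lambda>\<xi>. ?cls (P \<xi>)" and X = "\<lambda>Z. ?cls (\<Union>\<xi>\<in>Z. P \<xi>)"])
    show "?cls (P \<xi>) \<in> quot_carrier K" if "\<xi> \<in> K" for \<xi>
      by (rule class_in_quot_carrier[OF P_sub[OF that]])
    show "?cls (\<Union>\<xi>\<in>Z. P \<xi>) \<in> quot_carrier K" if "Z \<subseteq> K" for Z
      by (rule class_in_quot_carrier[OF UN_P_sub[OF that]])
    show "quot_le K (?cls (P \<xi>)) (?cls (\<Union>\<eta>\<in>Z. P \<eta>))" if Z: "Z \<subseteq> K" and \<xi>: "\<xi> \<in> Z" for Z \<xi>
    proof -
      have "P \<xi> - (\<Union>\<eta>\<in>Z. P \<eta>) \<in> small_ideal K"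
        using inf \<xi> by (intro small_ideal_subset[OF _ empty_in_small_ideal]) auto
      then show ?thesis
        using quot_le_class_iff[OF inf P_sub[OF subsetD[OF Z \<xi>]] UN_P_sub[OF Z]] by simp
    qed
    show "\<not> quot_le K c (?cls (\<Union>\<xi>\<in>Z. P \<xi>))"
      if Z: "Z \<subseteq> K" and q: "q \<in> K - Z" and c: "c \<in> quot_carrier K"
        and below_c: "quot_le K (?cls (P q)) c" for Z q c
    proof
      assume above_c: "quot_le K c (?cls (\<Union>\<xi>\<in>Z. P \<xi>))"
      have Pq_sub: "P q \<subseteq> K" using P_sub q by blast
      have "quot_le K (?cls (P q)) (?cls (\<Union>\<xi>\<in>Z. P \<xi>))"
        using class_in_quot_carrier[OF Pq_sub] c class_in_quot_carrier[OF UN_P_sub[OF Z]] below_c above_c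
        by (rule quot_le_trans[OF inf])
      then have "P q - (\<Union>\<xi>\<in>Z. P \<xi>) \<in> small_ideal K"
        using quot_le_class_iff[OF inf Pq_sub UN_P_sub[OF Z]] by simp
      moreover have "P q \<inter> P \<xi> = {}" if "\<xi> \<in> Z" for \<xi>
        using disjoint_family_onD[OF P_disj] q Z that by blast
      then have "P q - (\<Union>\<xi>\<in>Z. P \<xi>) = P q" by blast
      ultimately show False using P_large q by (auto simp: small_ideal_def)
    qed
  qed
qed

theorem proposition5p3:
  fixes K :: "'k set"
  assumes "regularCard (card_of K)"
    and "\<not> countable K"
  shows "\<not> kappa_FN K (quot_carrier K) (quot_le K) \<and> \<not> kappa_FN K (Pow K) (\<subseteq>)"
proof -
  have "infinite K" using assms(2) countable_finite by blast
  then show ?thesis using not_kappa_FN_quot not_kappa_FN_Pow assms(1) by blast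
qed

end
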